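(* Let $p\ge 4$ and let $I$ consist of one of the configurations $(3,3,1)$ or $(3,2,2)$ (numbers of chips of the three colors) together with $2p-7$ additional colored chips all of a single color, and no jokers or dominoes. Then there is a sequence of exactly $5p-12$ exchanges taking $I$ to a configuration with $p$ dominoes.
   Context: Game model: a configuration is a tuple $(a,b,c,x,d)$ of nonnegative integers: $a,b,c$ colored chips of three colors, $x$ jokers, $d$ dominoes. Exchanges: Rule 1: remove three chips, consisting of some number $j\in\{0,1,2,3\}$ of jokers together with $3-j$ colored chips of pairwise distinct colors, and add one domino and one joker. Rule 2: if $d\ge 3$, remove three dominoes and add seven jokers. *)

theory Defs
  imports Main
begin

text \<open>A configuration (a,b,c,x,d): a,b,c colored chips of the three colors,
x jokers, d dominoes.\<close>
type_synonym config = "nat \<times> nat \<times> nat \<times> nat \<times> nat"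

text \<open>Rule 1: remove ea, eb, ec \<in> {0,1} chips of the three colors (so the removed
colored chips have pairwise distinct colors) and j jokers with ea+eb+ec+j = 3;
add one domino and one joker.\<close>
definition rule1 :: "config \<Rightarrow> config \<Rightarrow> bool" where
  "rule1 C C' \<longleftrightarrow> (case C of (a,b,c,x,d) \<Rightarrow>
     (\<exists>ea eb ec j::nat. ea \<le> 1 \<and> eb \<le> 1 \<and> ec \<le> 1 \<and> j \<le> 3 \<and> ea + eb + ec + j = 3 \<and>
        ea \<le> a \<and> eb \<le> b \<and> ec \<le> c \<and> j \<le> x \<and>
        C' = (a - ea, b - eb, c - ec, x - j + 1, d + 1)))"

definition rule2 :: "config \<Rightarrow> config \<Rightarrow> bool" where
  "rule2 C C' \<longleftrightarrow> (case C of (a,b,c,x,d) \<Rightarrow>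
     3 \<le> d \<and> C' = (a, b, c, x + 7, d - 3))"

definition exchange :: "config \<Rightarrow> config \<Rightarrow> bool" where
  "exchange C C' \<longleftrightarrow> rule1 C C' \<or> rule2 C C'"

definition dominoes :: "config \<Rightarrow> nat" where
  "dominoes C = (case C of (a,b,c,x,d) \<Rightarrow> d)"

definition add_color :: "nat \<Rightarrow> nat \<Rightarrow> nat \<times> nat \<times> nat \<Rightarrow> nat \<times> nat \<times> nat" where
  "add_color i n t = (case t of (a,b,c) \<Rightarrow>
     if i = 0 then (a + n, b, c) else if i = 1 then (a, b + n, c) else (a, b, c + n))"

end

theory Submission
  imports Defs
begin

text \<open>Three exchanges of Rule 1 turn the seven chips of the base configuration into three
dominoes and one joker. From such a position one colored chip is converted into a domino in five
exchanges that restore the joker and the three dominoes: Rule 2 yields seven jokers, the chip goes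
with two of them, and the remaining six jokers (with the newly produced ones) give three more
dominoes. Doing this for p - 3 of the 2p - 7 extra chips takes 3 + 5(p - 3) = 5p - 12
exchanges and ends with p dominoes.\<close>

lemma exchange_rule1:
  assumes "ea \<le> 1" "eb \<le> 1" "ec \<le> 1" "ea + eb + ec + j = 3"
  shows "exchange (a + ea, b + eb, c + ec, x + j, d) (a, b, c, x + 1, d + 1)"
  unfolding exchange_def rule1_def prod.case
  by (intro disjI1, rule exI[of _ ea], rule exI[of _ eb], rule exI[of _ ec], rule exI[of _ j])
    (use assms in simp)

lemma exchange_rule2: "exchange (a, b, c, x, d + 3) (a, b, c, x + 7, d)"
  unfolding exchange_def rule2_def by simp

lemma exchange_jokers_to_domino: "exchange (a, b, c, x + 3, d) (a, b, c, x + 1, d + 1)"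
  using exchange_rule1[of 0 0 0 3] by simp

lemma opening_exchanges:
  assumes "base = (3,3,1) \<or> base = (3,2,2)"
  shows "(exchange ^^ 3) (case base of (a0, b0, c0) \<Rightarrow> (a0 + a, b0 + b, c0 + c, 0, 0))
           (a, b, c, 1, 3)"
  using assms
proof
  assume "base = (3,3,1)"
  moreover have "exchange (3 + a, 3 + b, 1 + c, 0, 0) (2 + a, 2 + b, c, 1, 1)"
    using exchange_rule1[of 1 1 1 0 "2 + a" "2 + b" c 0 0]
    by (simp add: ac_simps numeral_3_eq_3 numeral_2_eq_2)
  moreover have "exchange (2 + a, 2 + b, c, 1, 1) (1 + a, 1 + b, c, 1, 2)"
    using exchange_rule1[of 1 1 0 1 "1 + a" "1 + b" c 0 1]
    by (simp add: ac_simps numeral_3_eq_3 numeral_2_eq_2)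
  moreover have "exchange (1 + a, 1 + b, c, 1, 2) (a, b, c, 1, 3)"
    using exchange_rule1[of 1 1 0 1 a b c 0 2]
    by (simp add: ac_simps numeral_3_eq_3 numeral_2_eq_2)
  ultimately show ?thesis by (auto simp: numeral_3_eq_3)
next
  assume "base = (3,2,2)"
  moreover have "exchange (3 + a, 2 + b, 2 + c, 0, 0) (2 + a, 1 + b, 1 + c, 1, 1)"
    using exchange_rule1[of 1 1 1 0 "2 + a" "1 + b" "1 + c" 0 0]
    by (simp add: ac_simps numeral_3_eq_3 numeral_2_eq_2)
  moreover have "exchange (2 + a, 1 + b, 1 + c, 1, 1) (1 + a, b, 1 + c, 1, 2)"
    using exchange_rule1[of 1 1 0 1 "1 + a" b "1 + c" 0 1]
    by (simp add: ac_simps numeral_3_eq_3 numeral_2_eq_2)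
  moreover have "exchange (1 + a, b, 1 + c, 1, 2) (a, b, c, 1, 3)"
    using exchange_rule1[of 1 0 1 1 a b c 0 2]
    by (simp add: ac_simps numeral_3_eq_3 numeral_2_eq_2)
  ultimately show ?thesis by (auto simp: numeral_3_eq_3)
qed

lemma exchange_chip_to_domino:
  assumes "ea + eb + ec = 1"
  shows "(exchange ^^ 5) (a + ea, b + eb, c + ec, x + 1, d + 3) (a, b, c, x + 1, d + 4)"
proof -
  have "exchange (a + ea, b + eb, c + ec, x + 1, d + 3) (a + ea, b + eb, c + ec, x + 8, d)"
    using exchange_rule2[of "a + ea" "b + eb" "c + ec" "x + 1" d]
    by (simp add: ac_simps numeral_eq_Suc)
  moreover have "exchange (a + ea, b + eb, c + ec, x + 8, d) (a, b, c, x + 7, d + 1)"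
    using exchange_rule1[of ea eb ec 2 a b c "x + 6" d] assms
    by (simp add: ac_simps numeral_eq_Suc)
  moreover have "exchange (a, b, c, x + 7, d + 1) (a, b, c, x + 5, d + 2)"
    using exchange_jokers_to_domino[of a b c "x + 4" "d + 1"] by (simp add: ac_simps numeral_eq_Suc)
  moreover have "exchange (a, b, c, x + 5, d + 2) (a, b, c, x + 3, d + 3)"
    using exchange_jokers_to_domino[of a b c "x + 2" "d + 2"] by (simp add: ac_simps numeral_eq_Suc)
  moreover have "exchange (a, b, c, x + 3, d + 3) (a, b, c, x + 1, d + 4)"
    using exchange_jokers_to_domino[of a b c x "d + 3"] by (simp add: ac_simps numeral_eq_Suc)
  moreover have "(5::nat) = Suc (Suc (Suc (Suc (Suc 0))))" by simp
  ultimately show ?thesis by (metis relpowp_Suc_I2 relpowp_0_I)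
qed

lemma exchange_chips_to_dominoes:
  assumes "ea + eb + ec = 1"
  shows "(exchange ^^ (5 * n)) (a + n * ea, b + n * eb, c + n * ec, x + 1, d + 3)
           (a, b, c, x + 1, d + 3 + n)"
proof (induction n arbitrary: d)
  case 0
  then show ?case by simp
next
  case (Suc n)
  have "(exchange ^^ 5) (a + n * ea + ea, b + n * eb + eb, c + n * ec + ec, x + 1, d + 3)
          (a + n * ea, b + n * eb, c + n * ec, x + 1, (d + 1) + 3)"
    using exchange_chip_to_domino[OF assms, of "a + n * ea" "b + n * eb" "c + n * ec" x d]
    by (simp add: ac_simps numeral_eq_Suc)
  with Suc.IH[of "d + 1"] show ?case
    by (auto simp: relpowp_add ac_simps intro!: relcomppI)
qed

lemma add_color_unit:
  assumes "i < 3"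
  obtains ea eb ec where "ea + eb + ec = 1"
    and "add_color i n (a, b, c) = (a + n * ea, b + n * eb, c + n * ec)"
proof -
  consider "i = 0" | "i = 1" | "i = 2" using assms by linarith
  then show ?thesis
    by cases (auto simp: add_color_def intro: that[of 1 0 0] that[of 0 1 0] that[of 0 0 1])
qed

theorem mainTheorem6:
  fixes p i :: nat and base :: "nat \<times> nat \<times> nat"
  assumes "p \<ge> 4"
    and "base = (3,3,1) \<or> base = (3,2,2)"
    and "i < 3"
  shows "\<exists>C'. (exchange ^^ (5 * p - 12))
                 (case add_color i (2 * p - 7) base of (a,b,c) \<Rightarrow> (a,b,c,0,0)) C'
             \<and> dominoes C' = p"
proof -
  obtain a0 b0 c0 where base: "base = (a0, b0, c0)" by (cases base)
  obtain ea eb ec where unit: "ea + eb + ec = 1" and colored: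
    "add_color i (2 * p - 7) base =
      (a0 + (2 * p - 7) * ea, b0 + (2 * p - 7) * eb, c0 + (2 * p - 7) * ec)"
    using add_color_unit[OF assms(3)] base by metis
  have steps: "5 * p - 12 = 3 + 5 * (p - 3)" and extra: "2 * p - 7 = (p - 4) + (p - 3)"
    using assms(1) by auto
  let ?a = "(p - 4) * ea + (p - 3) * ea"
    and ?b = "(p - 4) * eb + (p - 3) * eb"
    and ?c = "(p - 4) * ec + (p - 3) * ec"
  have "(exchange ^^ 3) (case add_color i (2 * p - 7) base of (a, b, c) \<Rightarrow> (a, b, c, 0, 0))
          (?a, ?b, ?c, 1, 3)"
    using opening_exchanges[OF assms(2), of ?a ?b ?c]
    unfolding colored unfolding base extra by (simp add: add_mult_distrib)
  moreover have "(exchange ^^ (5 * (p - 3))) (?a, ?b, ?c, 1, 3)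
                   ((p - 4) * ea, (p - 4) * eb, (p - 4) * ec, 1, p)"
    using exchange_chips_to_dominoes[OF unit, where n = "p - 3" and x = 0 and d = 0
        and a = "(p - 4) * ea" and b = "(p - 4) * eb" and c = "(p - 4) * ec"] assms(1)
    by simp
  ultimately have "(exchange ^^ (5 * p - 12))
      (case add_color i (2 * p - 7) base of (a, b, c) \<Rightarrow> (a, b, c, 0, 0))
      ((p - 4) * ea, (p - 4) * eb, (p - 4) * ec, 1, p)"
    unfolding steps relpowp_add by blast
  then show ?thesis by (auto simp: dominoes_def)
qed

end
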